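(* Suppose the following statement (A) holds: for all positive integers $n,r$, every simple edge-coloured graph $G$ with $n$ vertices and $n$ colours, in which each colour class has size at least $r$, contains a cycle $C$ of length at most $\lceil n/r\rceil$ such that no two edges of $C$ that share a vertex have the same colour. Then the following statement (B) holds: for all positive integers $n,r$, every simple digraph with $n$ vertices and minimum outdegree at least $r$ contains a directed cycle of length at most $\lceil n/r\rceil$.
   Context: Graphs may have parallel edges. An edge-coloured graph is simple if no colour class contains two parallel edges. A colour class is the set of edges receiving a given colour. A digraph is simple if for all vertices $u,v$ there is at most one arc from $u$ to $v$. *)

theory Defs
  imports Complex_Main
begin

text \<open>Parallel edges are allowed (same e, different c); the set
  representation makes each colour class a simple graph, i.e. the coloured graph is simple.\<close>

definition simple_ecg :: "nat set \<Rightarrow> nat set \<Rightarrow> (nat set \<times> nat) set \<Rightarrow> bool" where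
  "simple_ecg V K E \<longleftrightarrow> finite V \<and> (\<forall>(e, c) \<in> E. e \<subseteq> V \<and> card e = 2 \<and> c \<in> K)"

definition colour_class :: "(nat set \<times> nat) set \<Rightarrow> nat \<Rightarrow> nat set set" where
  "colour_class E c = {e. (e, c) \<in> E}"

definition cyc_edge :: "nat list \<Rightarrow> nat list \<Rightarrow> nat \<Rightarrow> nat set \<times> nat" where
  "cyc_edge vs cs i = ({vs ! i, vs ! ((i + 1) mod length vs)}, cs ! i)"

definition ecg_cycle :: "(nat set \<times> nat) set \<Rightarrow> nat list \<Rightarrow> nat list \<Rightarrow> bool" where
  "ecg_cycle E vs cs \<longleftrightarrow> length cs = length vs \<and> length vs \<ge> 2 \<and> distinct vs
     \<and> distinct (map (cyc_edge vs cs) [0..<length vs])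
     \<and> (\<forall>i < length vs. cyc_edge vs cs i \<in> E)"

text \<open>No two edges of the cycle that share a vertex have the same colour
  (edges of a cycle sharing a vertex are exactly the cyclically consecutive ones).\<close>
definition properly_coloured_cycle :: "nat list \<Rightarrow> nat list \<Rightarrow> bool" where
  "properly_coloured_cycle vs cs \<longleftrightarrow>
     (\<forall>i < length vs. cs ! i \<noteq> cs ! ((i + 1) mod length vs))"

definition simple_digraph :: "nat set \<Rightarrow> (nat \<times> nat) set \<Rightarrow> bool" where
  "simple_digraph V A \<longleftrightarrow> finite V \<and> A \<subseteq> V \<times> V \<and> (\<forall>v. (v, v) \<notin> A)"

definition out_degree :: "(nat \<times> nat) set \<Rightarrow> nat \<Rightarrow> nat" where
  "out_degree A v = card {w. (v, w) \<in> A}"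

definition directed_cycle :: "(nat \<times> nat) set \<Rightarrow> nat list \<Rightarrow> bool" where
  "directed_cycle A vs \<longleftrightarrow> length vs \<ge> 2 \<and> distinct vs
     \<and> (\<forall>i < length vs. (vs ! i, vs ! ((i + 1) mod length vs)) \<in> A)"

definition statement_A :: bool where
  "statement_A \<longleftrightarrow>
    (\<forall>(n::nat) (r::nat) V K E. n > 0 \<and> r > 0 \<and> finite V \<and> card V = n \<and> card K = n
       \<and> simple_ecg V K E \<and> (\<forall>c \<in> K. card (colour_class E c) \<ge> r)
       \<longrightarrow> (\<exists>vs cs. ecg_cycle E vs cs \<and> properly_coloured_cycle vs cs
              \<and> int (length vs) \<le> \<lceil>real n / real r\<rceil>))"

definition statement_B :: bool where
  "statement_B \<longleftrightarrow>
    (\<forall>(n::nat) (r::nat) V A. n > 0 \<and> r > 0 \<and> finite V \<and> card V = n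
       \<and> simple_digraph V A \<and> (\<forall>v \<in> V. out_degree A v \<ge> r)
       \<longrightarrow> (\<exists>vs. directed_cycle A vs \<and> int (length vs) \<le> \<lceil>real n / real r\<rceil>))"

end

theory Submission
  imports Defs
begin

text \<open>Colour the edge {v, w} of each arc (v, w) by its tail v. The colour class of v is then
  the out-star of v, of size out_degree A v, so statement A yields a short properly coloured
  cycle v_0 ... v_(k-1). Each of its edges {v_i, v_(i+1)} is coloured by v_i or by v_(i+1), i.e.
  is an arc leaving v_i or leaving v_(i+1). If the edge i is coloured by v_(i+1), properness
  forbids that colour on edge i+1, so edge i+1 is coloured by v_(i+2); going once around the
  cycle, either all edges are coloured by their first end, and the cycle is directed, or all by
  their second end, and the reversed cycle is.\<close>

definition tail_coloured_graph :: "(nat \<times> nat) set \<Rightarrow> (nat set \<times> nat) set" where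
  "tail_coloured_graph A = (\<lambda>(v, w). ({v, w}, v)) ` A"

lemma mem_tail_coloured_graph_iff:
  "(e, c) \<in> tail_coloured_graph A \<longleftrightarrow> (\<exists>w. (c, w) \<in> A \<and> e = {c, w})"
  unfolding tail_coloured_graph_def by auto

lemma simple_ecg_tail_coloured_graph:
  assumes "simple_digraph V A"
  shows "simple_ecg V V (tail_coloured_graph A)"
  using assms unfolding simple_digraph_def simple_ecg_def
  by (auto simp: mem_tail_coloured_graph_iff card_insert_if)

lemma card_colour_class_tail_coloured_graph:
  assumes "\<And>v. (v, v) \<notin> A"
  shows "card (colour_class (tail_coloured_graph A) v) = out_degree A v"
proof -
  have "colour_class (tail_coloured_graph A) v = (\<lambda>w. {v, w}) ` {w. (v, w) \<in> A}"
    unfolding colour_class_def by (auto simp: mem_tail_coloured_graph_iff)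
  moreover have "inj_on (\<lambda>w. {v, w}) {w. (v, w) \<in> A}"
    using assms by (auto intro!: inj_onI simp: doubleton_eq_iff)
  ultimately show ?thesis
    by (simp add: card_image out_degree_def)
qed

lemma cyc_edge_tail_coloured_graph:
  assumes "cyc_edge vs cs i \<in> tail_coloured_graph A"
  defines "j \<equiv> (i + 1) mod length vs"
  shows "if cs ! i = vs ! i then (vs ! i, vs ! j) \<in> A
         else cs ! i = vs ! j \<and> (vs ! j, vs ! i) \<in> A"
proof -
  obtain w where arc: "(cs ! i, w) \<in> A" and ends: "{vs ! i, vs ! j} = {cs ! i, w}"
    using assms(1) unfolding cyc_edge_def j_def mem_tail_coloured_graph_iff by blast
  from ends consider "vs ! i = cs ! i" "vs ! j = w" | "vs ! i = w" "vs ! j = cs ! i"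
    unfolding doubleton_eq_iff by blast
  then show ?thesis
    using arc by cases (simp_all, metis)
qed

lemma cyclic_induct:
  fixes k :: nat
  assumes step: "\<And>i. i < k \<Longrightarrow> P i \<Longrightarrow> P ((i + 1) mod k)"
    and start: "i < k" "P i" and "j < k"
  shows "P j"
proof -
  have "P ((i + m) mod k)" for m
  proof (induction m)
    case 0
    then show ?case using start by simp
  next
    case (Suc m)
    have "(i + m) mod k < k"
      using start by simp
    from step[OF this Suc] show ?case
      by (simp add: mod_Suc_eq)
  qed
  then have "P ((i + (k - i + j)) mod k)" .
  moreover have "(i + (k - i + j)) mod k = j"
    using start \<open>j < k\<close> by simp
  ultimately show ?thesis
    by simp
qed

lemma directed_cycle_rev:
  assumes "directed_cycle (A\<inverse>) vs"
  shows "directed_cycle A (rev vs)"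
  unfolding directed_cycle_def
proof (intro conjI allI impI)
  define k where "k = length vs"
  have "k \<ge> 2" and arcs: "\<And>i. i < k \<Longrightarrow> (vs ! ((i + 1) mod k), vs ! i) \<in> A"
    using assms unfolding directed_cycle_def k_def by auto
  show "2 \<le> length (rev vs)" "distinct (rev vs)"
    using assms unfolding directed_cycle_def by auto
  fix j
  assume "j < length (rev vs)"
  then have "j < k" by (simp add: k_def)
  define i where "i = k - Suc ((j + 1) mod k)"
  have "i < k"
    using \<open>k \<ge> 2\<close> by (simp add: i_def)
  moreover have "(i + 1) mod k = k - Suc j"
    using \<open>j < k\<close> \<open>k \<ge> 2\<close> by (cases "Suc j = k") (auto simp: i_def)
  ultimately have arc: "(vs ! (k - Suc j), vs ! i) \<in> A"
    using arcs by metis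
  have "(j + 1) mod k < k"
    using \<open>k \<ge> 2\<close> by simp
  then have "rev vs ! ((j + 1) mod k) = vs ! i"
    by (simp add: rev_nth i_def k_def)
  moreover have "rev vs ! j = vs ! (k - Suc j)"
    using \<open>j < k\<close> by (simp add: rev_nth k_def)
  ultimately show "(rev vs ! j, rev vs ! ((j + 1) mod length (rev vs))) \<in> A"
    using arc by (simp add: k_def)
qed

lemma properly_coloured_tail_coloured_cycle:
  assumes cycle: "ecg_cycle (tail_coloured_graph A) vs cs"
    and proper: "properly_coloured_cycle vs cs"
  shows "directed_cycle A vs \<or> directed_cycle A (rev vs)"
proof -
  define k where "k = length vs"
  have "k \<ge> 2" "distinct vs"
    using cycle unfolding ecg_cycle_def k_def by auto
  have edge: "if cs ! i = vs ! i then (vs ! i, vs ! ((i + 1) mod k)) \<in> A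
      else cs ! i = vs ! ((i + 1) mod k) \<and> (vs ! ((i + 1) mod k), vs ! i) \<in> A"
    if "i < k" for i
  proof -
    have "cyc_edge vs cs i \<in> tail_coloured_graph A"
      using that cycle by (simp add: ecg_cycle_def k_def)
    from cyc_edge_tail_coloured_graph[OF this] show ?thesis
      by (simp only: k_def)
  qed
  have "(\<forall>i < k. cs ! i \<noteq> vs ! i) \<or> (\<forall>i < k. cs ! i = vs ! i)"
  proof (rule disjCI)
    assume "\<not> (\<forall>i < k. cs ! i = vs ! i)"
    then obtain i where "i < k" "cs ! i \<noteq> vs ! i" by blast
    show "\<forall>j < k. cs ! j \<noteq> vs ! j"
    proof (intro allI impI)
      fix j assume "j < k"
      show "cs ! j \<noteq> vs ! j"
      proof (rule cyclic_induct[where P = "\<lambda>i. cs ! i \<noteq> vs ! i"])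
        fix i assume "i < k" "cs ! i \<noteq> vs ! i"
        with edge have "cs ! i = vs ! ((i + 1) mod k)" by metis
        moreover have "cs ! i \<noteq> cs ! ((i + 1) mod k)"
          using proper \<open>i < k\<close> unfolding properly_coloured_cycle_def k_def by blast
        ultimately show "cs ! ((i + 1) mod k) \<noteq> vs ! ((i + 1) mod k)" by simp
      qed fact+
    qed
  qed
  then show ?thesis
  proof
    assume "\<forall>i < k. cs ! i \<noteq> vs ! i"
    with edge have "directed_cycle (A\<inverse>) vs"
      using \<open>k \<ge> 2\<close> \<open>distinct vs\<close> unfolding directed_cycle_def k_def by auto
    then show ?thesis
      using directed_cycle_rev by blast
  next
    assume "\<forall>i < k. cs ! i = vs ! i"
    with edge have "directed_cycle A vs"
      using \<open>k \<ge> 2\<close> \<open>distinct vs\<close> unfolding directed_cycle_def k_def by auto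
    then show ?thesis ..
  qed
qed

theorem mainTheorem1:
  assumes "statement_A"
  shows "statement_B"
  unfolding statement_B_def
proof (intro allI impI, elim conjE)
  fix n r :: nat and V and A :: "(nat \<times> nat) set"
  assume "n > 0" "r > 0" "finite V" "card V = n"
    and digraph: "simple_digraph V A" and out_degree: "\<forall>v\<in>V. r \<le> out_degree A v"
  have "\<forall>v\<in>V. r \<le> card (colour_class (tail_coloured_graph A) v)"
    using out_degree digraph
    by (simp add: card_colour_class_tail_coloured_graph simple_digraph_def)
  with assms simple_ecg_tail_coloured_graph[OF digraph] \<open>n > 0\<close> \<open>r > 0\<close> \<open>finite V\<close> \<open>card V = n\<close>
  obtain vs cs where cycle: "ecg_cycle (tail_coloured_graph A) vs cs"
    and proper: "properly_coloured_cycle vs cs"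
    and length: "int (length vs) \<le> \<lceil>real n / real r\<rceil>"
    unfolding statement_A_def by blast
  from properly_coloured_tail_coloured_cycle[OF cycle proper]
  show "\<exists>vs. directed_cycle A vs \<and> int (length vs) \<le> \<lceil>real n / real r\<rceil>"
    using length by (metis length_rev)
qed

end
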